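(* Let $G=(V,E,\gamma,c)$ be a typed DAG task executed on a platform with $M_s\ge1$ cores of each type $s\in S$ under a work-conserving scheduling algorithm. Let $\pi=(\tau_1,\dots,\tau_k)$ be a critical path of an arbitrary execution sequence of $G$ with finish times $f(\cdot)$. Set $f(\tau_0):=0$; for $1\le i\le k$ let $y_i$ be the total length of the time within $[f(\tau_{i-1}),f(\tau_i))$ during which $\tau_i$ is not executing, and for $s\in S$ let $\mathcal{Y}_s=\sum_{i:\gamma(\tau_i)=s}y_i$. Then for every $s\in S$, \[ \mathcal{Y}_s\le \frac{1}{M_s}\sum_{v\in \mathrm{ivs}(\pi,s)}c(v). \]
   Context: A typed DAG task is $G=(V,E,\gamma,c)$ where $(V,E)$ is a finite directed acyclic graph with a unique source $v_{src}$ and a unique sink $v_{snk}$, $S$ is a finite set of core types, $\gamma:V\to S$ gives the type of each vertex, and $c:V\to\mathbb{R}_{\ge0}$ gives the WCET of each vertex. The platform has $M_s\ge1$ cores of type $s$. $\mathrm{pre}(u)$, $\mathrm{ans}(u)$, $\mathrm{des}(u)$ denote the (immediate) predecessors, ancestors and descendants of $u$. A complete path is a path from $v_{src}$ to $v_{snk}$. For $v\in V$, $\mathrm{par}(v)=\{u\in V: u\ne v,\ \gamma(u)=\gamma(v),\ u\notin \mathrm{ans}(v)\cup\mathrm{des}(v)\}$. For a path $\pi=(\tau_1,\dots,\tau_k)$ and $s\in S$, $\mathrm{ivs}(\pi,s)=\bigcup_{i:\gamma(\tau_i)=s}\mathrm{par}(\tau_i)$. Runtime model: a vertex becomes eligible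 when all its predecessors have finished (the source at time $0$); a vertex $v$ may only execute on cores of type $\gamma(v)$, one core at a time, for a total of at most $c(v)$ time units. Scheduling is work-conserving: an eligible unfinished vertex of type $s$ must be executing whenever some core of type $s$ is available. An execution sequence is a resulting trace; $f(v)$ is the finish time of $v$. A critical path of an execution sequence is a complete path $(\tau_1,\dots,\tau_k)$ with $f(\tau_{i-1})=\max_{u\in\mathrm{pre}(\tau_i)}f(u)$ for all $2\le i\le k$. *)

theory Defs
  imports "HOL-Analysis.Analysis"
begin

definition dag_task :: "'v set \<Rightarrow> ('v \<times> 'v) set \<Rightarrow> 'v \<Rightarrow> 'v \<Rightarrow> bool" where
  "dag_task V E src snk \<longleftrightarrow> finite V \<and> E \<subseteq> V \<times> V \<and> acyclic E \<and> src \<in> V \<and> snk \<in> V \<and>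
     (\<forall>v\<in>V. (\<not>(\<exists>u. (u, v) \<in> E)) \<longleftrightarrow> v = src) \<and>
     (\<forall>v\<in>V. (\<not>(\<exists>w. (v, w) \<in> E)) \<longleftrightarrow> v = snk)"

definition pre :: "('v \<times> 'v) set \<Rightarrow> 'v \<Rightarrow> 'v set" where
  "pre E v = {u. (u, v) \<in> E}"

definition ans :: "('v \<times> 'v) set \<Rightarrow> 'v \<Rightarrow> 'v set" where
  "ans E v = {u. (u, v) \<in> E\<^sup>+}"

definition des :: "('v \<times> 'v) set \<Rightarrow> 'v \<Rightarrow> 'v set" where
  "des E v = {w. (v, w) \<in> E\<^sup>+}"

definition par :: "'v set \<Rightarrow> ('v \<times> 'v) set \<Rightarrow> ('v \<Rightarrow> 's) \<Rightarrow> 'v \<Rightarrow> 'v set" where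
  "par V E \<gamma> v = {u \<in> V. u \<noteq> v \<and> \<gamma> u = \<gamma> v \<and> u \<notin> ans E v \<union> des E v}"

text \<open>Paths are nonempty vertex lists (\<tau>_1,...,\<tau>_k) = (\<pi>!0,...,\<pi>!(k-1)).\<close>
definition complete_path :: "('v \<times> 'v) set \<Rightarrow> 'v \<Rightarrow> 'v \<Rightarrow> 'v list \<Rightarrow> bool" where
  "complete_path E src snk \<pi> \<longleftrightarrow> \<pi> \<noteq> [] \<and> hd \<pi> = src \<and> last \<pi> = snk \<and>
     (\<forall>i. Suc i < length \<pi> \<longrightarrow> (\<pi> ! i, \<pi> ! Suc i) \<in> E)"

definition ivs :: "'v set \<Rightarrow> ('v \<times> 'v) set \<Rightarrow> ('v \<Rightarrow> 's) \<Rightarrow> 'v list \<Rightarrow> 's \<Rightarrow> 'v set" where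
  "ivs V E \<gamma> \<pi> s = (\<Union>i \<in> {i. i < length \<pi> \<and> \<gamma> (\<pi> ! i) = s}. par V E \<gamma> (\<pi> ! i))"

definition elig :: "('v \<times> 'v) set \<Rightarrow> ('v \<Rightarrow> real) \<Rightarrow> 'v \<Rightarrow> real" where
  "elig E f v = (if pre E v = {} then 0 else Max (f ` pre E v))"

text \<open>An execution sequence: run t is the set of vertices executing at time t,
  f v the finish time of v.  Each executing vertex occupies one core of its type.\<close>
definition exec_seq :: "'v set \<Rightarrow> ('v \<times> 'v) set \<Rightarrow> ('v \<Rightarrow> 's) \<Rightarrow> ('v \<Rightarrow> real) \<Rightarrow> ('s \<Rightarrow> nat)
     \<Rightarrow> (real \<Rightarrow> 'v set) \<Rightarrow> ('v \<Rightarrow> real) \<Rightarrow> bool" where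
  "exec_seq V E \<gamma> c M run f \<longleftrightarrow>
     (\<forall>t. run t \<subseteq> V) \<and>
     (\<forall>v\<in>V. {t. v \<in> run t} \<in> sets lborel) \<and>
     (\<forall>v\<in>V. emeasure lborel {t. v \<in> run t} \<le> ennreal (c v)) \<and>
     (\<forall>v\<in>V. elig E f v \<le> f v) \<and>
     (\<forall>t v. v \<in> run t \<longrightarrow> elig E f v \<le> t \<and> t < f v) \<and>
     (\<forall>t s. card {u \<in> run t. \<gamma> u = s} \<le> M s) \<and>
     (\<forall>t. \<forall>v\<in>V. elig E f v \<le> t \<and> t < f v \<and> v \<notin> run t \<longrightarrow>
          card {u \<in> run t. \<gamma> u = \<gamma> v} = M (\<gamma> v))"

definition critical_path :: "('v \<times> 'v) set \<Rightarrow> 'v \<Rightarrow> 'v \<Rightarrow> ('v \<Rightarrow> real) \<Rightarrow> 'v list \<Rightarrow> bool" where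
  "critical_path E src snk f \<pi> \<longleftrightarrow> complete_path E src snk \<pi> \<and>
     (\<forall>i. Suc i < length \<pi> \<longrightarrow> f (\<pi> ! i) = Max (f ` pre E (\<pi> ! Suc i)))"

text \<open>y_i for the (0-indexed) i-th path vertex: measure of the time in
  [f(previous vertex), f(\<pi>!i)) during which \<pi>!i is not executing; f(\<tau>_0) = 0.\<close>
definition ywait :: "(real \<Rightarrow> 'v set) \<Rightarrow> ('v \<Rightarrow> real) \<Rightarrow> 'v list \<Rightarrow> nat \<Rightarrow> real" where
  "ywait run f \<pi> i =
     measure lborel {t. (if i = 0 then 0 else f (\<pi> ! (i - 1))) \<le> t \<and> t < f (\<pi> ! i) \<and> \<pi> ! i \<notin> run t}"

definition Ytot :: "('v \<Rightarrow> 's) \<Rightarrow> (real \<Rightarrow> 'v set) \<Rightarrow> ('v \<Rightarrow> real) \<Rightarrow> 'v list \<Rightarrow> 's \<Rightarrow> real" where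
  "Ytot \<gamma> run f \<pi> s = (\<Sum>i | i < length \<pi> \<and> \<gamma> (\<pi> ! i) = s. ywait run f \<pi> i)"

end

theory Submission
  imports Defs
begin

text \<open>
  While a path vertex of type s waits (eligible, unfinished, not running), work conservation
  keeps all M s cores of type s busy.  The vertices occupying them can be neither ancestors
  (already finished) nor descendants (not yet eligible) of the waiting vertex, so they lie in
  ivs(\<pi>, s).  On a critical path each vertex becomes eligible exactly when its predecessor on
  the path finishes, so the waiting periods of distinct path vertices are disjoint.  Hence
  M s times the total waiting time of type s is covered by the execution time of ivs(\<pi>, s),
  which is at most the sum of its WCETs.
\<close>

lemma of_nat_mult_emeasure_le_sum_emeasure:
  assumes "finite P" and "U \<in> sets N" and "\<And>u. u \<in> P \<Longrightarrow> R u \<in> sets N"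
    and "\<And>t. t \<in> U \<Longrightarrow> m \<le> card {u \<in> P. t \<in> R u}"
  shows "of_nat m * emeasure N U \<le> (\<Sum>u\<in>P. emeasure N (R u))"
proof -
  have "of_nat m * indicator U t \<le> (\<Sum>u\<in>P. indicator (R u) t :: ennreal)" for t
  proof -
    have "(\<Sum>u\<in>P. indicator (R u) t :: ennreal) = of_nat (card {u \<in> P. t \<in> R u})"
      using assms(1) by (simp add: indicator_def sum.If_cases Int_def)
    then show ?thesis using assms(4)[of t] by (cases "t \<in> U") auto
  qed
  then have "(\<integral>\<^sup>+ t. of_nat m * indicator U t \<partial>N) \<le> (\<integral>\<^sup>+ t. (\<Sum>u\<in>P. indicator (R u) t) \<partial>N)"
    by (intro nn_integral_mono)
  then show ?thesis
    using assms(2,3) by (simp add: nn_integral_cmult_indicator nn_integral_sum)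
qed

lemma finite_pre:
  assumes "dag_task V E src snk"
  shows "finite (pre E v)"
proof -
  have "pre E v \<subseteq> V" using assms by (auto simp: dag_task_def pre_def)
  then show ?thesis using assms finite_subset by (auto simp: dag_task_def)
qed

lemma finish_le_elig:
  assumes "dag_task V E src snk" and "(u, v) \<in> E"
  shows "f u \<le> elig E f v"
proof -
  have "u \<in> pre E v" using assms(2) by (simp add: pre_def)
  then show ?thesis using finite_pre[OF assms(1)] by (auto simp: elig_def intro!: Max_ge)
qed

lemma finish_le_elig_trancl:
  assumes dag: "dag_task V E src snk" and elig_le: "\<forall>v\<in>V. elig E f v \<le> f v"
    and "(u, v) \<in> E\<^sup>+"
  shows "f u \<le> elig E f v"
  using \<open>(u, v) \<in> E\<^sup>+\<close>
proof (induction rule: trancl_induct)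
  case (base v)
  then show ?case by (rule finish_le_elig[OF dag])
next
  case (step w v)
  have "w \<in> V" using step.hyps(2) dag by (auto simp: dag_task_def)
  then have "f u \<le> f w" using step.IH elig_le by fastforce
  also have "f w \<le> elig E f v" using dag step.hyps(2) by (rule finish_le_elig)
  finally show ?case .
qed

definition wait_window :: "('v \<times> 'v) set \<Rightarrow> ('v \<Rightarrow> real) \<Rightarrow> (real \<Rightarrow> 'v set) \<Rightarrow> 'v \<Rightarrow> real set" where
  "wait_window E f run v = {t. elig E f v \<le> t \<and> t < f v \<and> v \<notin> run t}"

lemma wait_window_in_sets_lborel:
  assumes "{t. v \<in> run t} \<in> sets lborel"
  shows "wait_window E f run v \<in> sets lborel"
proof -
  have "wait_window E f run v = {elig E f v..<f v} - {t. v \<in> run t}"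
    by (auto simp: wait_window_def)
  then show ?thesis using assms by auto
qed

lemma emeasure_wait_window_finite: "emeasure lborel (wait_window E f run v) \<noteq> top"
proof -
  have "emeasure lborel (wait_window E f run v) \<le> emeasure lborel {elig E f v..<f v}"
    by (intro emeasure_mono) (auto simp: wait_window_def)
  also have "\<dots> < top" by (cases "elig E f v \<le> f v") auto
  finally show ?thesis by simp
qed

lemma exec_seq_running_in_par:
  assumes dag: "dag_task V E src snk" and exec: "exec_seq V E \<gamma> c M run f"
    and "t \<in> wait_window E f run v" and "u \<in> run t" and "\<gamma> u = \<gamma> v"
  shows "u \<in> par V E \<gamma> v"
proof -
  have v: "elig E f v \<le> t" "t < f v" "v \<notin> run t"
    using assms(3) by (auto simp: wait_window_def)
  have u: "u \<in> V" "elig E f u \<le> t" "t < f u"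
    using exec \<open>u \<in> run t\<close> by (auto simp: exec_seq_def)
  have elig_le: "\<forall>v\<in>V. elig E f v \<le> f v" using exec by (simp add: exec_seq_def)
  have "u \<notin> ans E v"
    using finish_le_elig_trancl[OF dag elig_le, of u v] u v by (auto simp: ans_def)
  moreover have "u \<notin> des E v"
    using finish_le_elig_trancl[OF dag elig_le, of v u] u v by (auto simp: des_def)
  ultimately show ?thesis
    using u v \<open>u \<in> run t\<close> \<open>\<gamma> u = \<gamma> v\<close> by (auto simp: par_def)
qed

lemma exec_seq_card_running_par:
  assumes dag: "dag_task V E src snk" and exec: "exec_seq V E \<gamma> c M run f"
    and "v \<in> V" and "t \<in> wait_window E f run v"
  shows "M (\<gamma> v) \<le> card {u \<in> par V E \<gamma> v. u \<in> run t}"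
proof -
  have "M (\<gamma> v) = card {u \<in> run t. \<gamma> u = \<gamma> v}"
    using exec \<open>v \<in> V\<close> \<open>t \<in> wait_window E f run v\<close> by (auto simp: exec_seq_def wait_window_def)
  also have "\<dots> \<le> card {u \<in> par V E \<gamma> v. u \<in> run t}"
  proof (rule card_mono)
    show "finite {u \<in> par V E \<gamma> v. u \<in> run t}"
      using dag by (auto simp: dag_task_def par_def)
    show "{u \<in> run t. \<gamma> u = \<gamma> v} \<subseteq> {u \<in> par V E \<gamma> v. u \<in> run t}"
      using exec_seq_running_in_par[OF dag exec \<open>t \<in> wait_window E f run v\<close>] by auto
  qed
  finally show ?thesis .
qed

lemma complete_path_nth_mem:
  assumes "dag_task V E src snk" and "complete_path E src snk \<pi>" and "i < length \<pi>"
  shows "\<pi> ! i \<in> V"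
proof (cases i)
  case 0
  then show ?thesis using assms by (auto simp: dag_task_def complete_path_def hd_conv_nth)
next
  case (Suc j)
  then have "(\<pi> ! j, \<pi> ! i) \<in> E" using assms(2,3) by (simp add: complete_path_def)
  then show ?thesis using assms(1) by (auto simp: dag_task_def)
qed

lemma critical_path_elig_nth:
  assumes dag: "dag_task V E src snk" and crit: "critical_path E src snk f \<pi>"
    and "i < length \<pi>"
  shows "elig E f (\<pi> ! i) = (if i = 0 then 0 else f (\<pi> ! (i - 1)))"
proof (cases i)
  case 0
  have "pre E src = {}" using dag by (auto simp: dag_task_def pre_def)
  then show ?thesis
    using 0 crit by (auto simp: elig_def critical_path_def complete_path_def hd_conv_nth)
next
  case (Suc j)
  then have "\<pi> ! j \<in> pre E (\<pi> ! i)"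
    using crit \<open>i < length \<pi>\<close> by (simp add: critical_path_def complete_path_def pre_def)
  then show ?thesis
    using Suc crit \<open>i < length \<pi>\<close> by (auto simp: elig_def critical_path_def)
qed

lemma ywait_eq_measure_wait_window:
  assumes "dag_task V E src snk" and "critical_path E src snk f \<pi>" and "i < length \<pi>"
  shows "ywait run f \<pi> i = measure lborel (wait_window E f run (\<pi> ! i))"
  using critical_path_elig_nth[OF assms] by (simp add: ywait_def wait_window_def)

lemma critical_path_finish_mono:
  assumes dag: "dag_task V E src snk" and crit: "critical_path E src snk f \<pi>"
    and elig_le: "\<forall>v\<in>V. elig E f v \<le> f v"
    and "i \<le> j" and "j < length \<pi>"
  shows "f (\<pi> ! i) \<le> f (\<pi> ! j)"
  using \<open>i \<le> j\<close> \<open>j < length \<pi>\<close>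
proof (induction j rule: dec_induct)
  case base
  then show ?case by simp
next
  case (step j)
  have "\<pi> ! Suc j \<in> V"
    using crit step.prems by (intro complete_path_nth_mem[OF dag]) (auto simp: critical_path_def)
  then have "f (\<pi> ! j) \<le> f (\<pi> ! Suc j)"
    using critical_path_elig_nth[OF dag crit step.prems] elig_le by fastforce
  then show ?case using step.IH step.prems by simp
qed

lemma critical_path_wait_windows_disjoint:
  assumes dag: "dag_task V E src snk" and crit: "critical_path E src snk f \<pi>"
    and elig_le: "\<forall>v\<in>V. elig E f v \<le> f v"
  shows "disjoint_family_on (\<lambda>i. wait_window E f run (\<pi> ! i)) {i. i < length \<pi>}"
proof -
  have "wait_window E f run (\<pi> ! i) \<inter> wait_window E f run (\<pi> ! j) = {}"
    if "i < j" and "j < length \<pi>" for i j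
  proof -
    have "f (\<pi> ! i) \<le> f (\<pi> ! (j - 1))"
      using that by (intro critical_path_finish_mono[OF dag crit elig_le]) auto
    also have "\<dots> = elig E f (\<pi> ! j)"
      using critical_path_elig_nth[OF dag crit \<open>j < length \<pi>\<close>] that by simp
    finally show ?thesis by (auto simp: wait_window_def)
  qed
  then show ?thesis
    unfolding disjoint_family_on_def by (metis Int_commute linorder_neq_iff mem_Collect_eq)
qed

lemma exec_seq_sum_emeasure_running_le:
  assumes "exec_seq V E \<gamma> c M run f" and "\<forall>v\<in>V. c v \<ge> 0" and "P \<subseteq> V"
  shows "(\<Sum>u\<in>P. emeasure lborel {t. u \<in> run t}) \<le> ennreal (\<Sum>u\<in>P. c u)"
proof -
  have "(\<Sum>u\<in>P. emeasure lborel {t. u \<in> run t}) \<le> (\<Sum>u\<in>P. ennreal (c u))"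
    using assms(1,3) by (intro sum_mono) (auto simp: exec_seq_def)
  also have "\<dots> = ennreal (\<Sum>u\<in>P. c u)"
    using assms(2,3) by (subst sum_ennreal) auto
  finally show ?thesis .
qed

lemma ivs_subset: "ivs V E \<gamma> \<pi> s \<subseteq> V"
  by (auto simp: ivs_def par_def)

lemma finite_ivs: "finite V \<Longrightarrow> finite (ivs V E \<gamma> \<pi> s)"
  using ivs_subset by (rule finite_subset)

lemma critical_path_card_running_ivs:
  assumes dag: "dag_task V E src snk" and exec: "exec_seq V E \<gamma> c M run f"
    and crit: "critical_path E src snk f \<pi>"
    and "i < length \<pi>" and "t \<in> wait_window E f run (\<pi> ! i)"
  shows "M (\<gamma> (\<pi> ! i)) \<le> card {u \<in> ivs V E \<gamma> \<pi> (\<gamma> (\<pi> ! i)). u \<in> run t}"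
proof -
  have "\<pi> ! i \<in> V"
    using crit \<open>i < length \<pi>\<close> by (intro complete_path_nth_mem[OF dag]) (auto simp: critical_path_def)
  then have "M (\<gamma> (\<pi> ! i)) \<le> card {u \<in> par V E \<gamma> (\<pi> ! i). u \<in> run t}"
    using assms(5) by (rule exec_seq_card_running_par[OF dag exec])
  also have "\<dots> \<le> card {u \<in> ivs V E \<gamma> \<pi> (\<gamma> (\<pi> ! i)). u \<in> run t}"
  proof (rule card_mono)
    show "finite {u \<in> ivs V E \<gamma> \<pi> (\<gamma> (\<pi> ! i)). u \<in> run t}"
      using dag by (simp add: dag_task_def finite_ivs)
    show "{u \<in> par V E \<gamma> (\<pi> ! i). u \<in> run t} \<subseteq> {u \<in> ivs V E \<gamma> \<pi> (\<gamma> (\<pi> ! i)). u \<in> run t}"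
      using \<open>i < length \<pi>\<close> by (auto simp: ivs_def)
  qed
  finally show ?thesis .
qed

lemma critical_path_wait_window_in_sets_lborel:
  assumes dag: "dag_task V E src snk" and exec: "exec_seq V E \<gamma> c M run f"
    and crit: "critical_path E src snk f \<pi>" and "i < length \<pi>"
  shows "wait_window E f run (\<pi> ! i) \<in> sets lborel"
proof (rule wait_window_in_sets_lborel)
  have "\<pi> ! i \<in> V"
    using crit \<open>i < length \<pi>\<close> by (intro complete_path_nth_mem[OF dag]) (auto simp: critical_path_def)
  then show "{t. \<pi> ! i \<in> run t} \<in> sets lborel" using exec by (simp add: exec_seq_def)
qed

lemma critical_path_Ytot_eq_emeasure:
  fixes s
  assumes dag: "dag_task V E src snk" and exec: "exec_seq V E \<gamma> c M run f"
    and crit: "critical_path E src snk f \<pi>"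
  defines "I \<equiv> {i. i < length \<pi> \<and> \<gamma> (\<pi> ! i) = s}"
  shows "ennreal (Ytot \<gamma> run f \<pi> s) = emeasure lborel (\<Union>i\<in>I. wait_window E f run (\<pi> ! i))"
proof -
  have elig_le: "\<forall>v\<in>V. elig E f v \<le> f v" using exec by (simp add: exec_seq_def)
  have "Ytot \<gamma> run f \<pi> s = (\<Sum>i\<in>I. measure lborel (wait_window E f run (\<pi> ! i)))"
    unfolding Ytot_def I_def
    by (rule sum.cong) (auto simp: ywait_eq_measure_wait_window[OF dag crit])
  then have "ennreal (Ytot \<gamma> run f \<pi> s) = (\<Sum>i\<in>I. emeasure lborel (wait_window E f run (\<pi> ! i)))"
    by (simp add: sum_ennreal emeasure_eq_ennreal_measure[OF emeasure_wait_window_finite])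
  also have "\<dots> = emeasure lborel (\<Union>i\<in>I. wait_window E f run (\<pi> ! i))"
  proof (rule sum_emeasure)
    show "(\<lambda>i. wait_window E f run (\<pi> ! i)) ` I \<subseteq> sets lborel"
      using critical_path_wait_window_in_sets_lborel[OF dag exec crit] by (auto simp: I_def)
    show "disjoint_family_on (\<lambda>i. wait_window E f run (\<pi> ! i)) I"
      using critical_path_wait_windows_disjoint[OF dag crit elig_le]
      by (rule disjoint_family_on_mono[rotated]) (auto simp: I_def)
    show "finite I" by (simp add: I_def)
  qed
  finally show ?thesis .
qed

lemma critical_path_mult_Ytot_le:
  assumes dag: "dag_task V E src snk" and exec: "exec_seq V E \<gamma> c M run f"
    and crit: "critical_path E src snk f \<pi>" and c_nonneg: "\<forall>v\<in>V. c v \<ge> 0"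
  shows "real (M s) * Ytot \<gamma> run f \<pi> s \<le> (\<Sum>v\<in>ivs V E \<gamma> \<pi> s. c v)"
proof -
  define I where "I = {i. i < length \<pi> \<and> \<gamma> (\<pi> ! i) = s}"
  define P where "P = ivs V E \<gamma> \<pi> s"
  have "ennreal (real (M s) * Ytot \<gamma> run f \<pi> s)
      = of_nat (M s) * emeasure lborel (\<Union>i\<in>I. wait_window E f run (\<pi> ! i))"
    using critical_path_Ytot_eq_emeasure[OF dag exec crit]
    by (simp add: I_def ennreal_mult' ennreal_of_nat_eq_real_of_nat)
  also have "\<dots> \<le> (\<Sum>u\<in>P. emeasure lborel {t. u \<in> run t})"
  proof (rule of_nat_mult_emeasure_le_sum_emeasure)
    show "finite P" using dag by (simp add: P_def dag_task_def finite_ivs)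
    show "(\<Union>i\<in>I. wait_window E f run (\<pi> ! i)) \<in> sets lborel"
      using critical_path_wait_window_in_sets_lborel[OF dag exec crit] by (auto simp: I_def)
    show "{t. u \<in> run t} \<in> sets lborel" if "u \<in> P" for u
      using exec subsetD[OF ivs_subset that[unfolded P_def]] by (simp add: exec_seq_def)
    show "M s \<le> card {u \<in> P. t \<in> {t. u \<in> run t}}"
      if "t \<in> (\<Union>i\<in>I. wait_window E f run (\<pi> ! i))" for t
      using that critical_path_card_running_ivs[OF dag exec crit] by (auto simp: I_def P_def)
  qed
  also have "\<dots> \<le> ennreal (\<Sum>u\<in>P. c u)"
    using exec c_nonneg ivs_subset unfolding P_def by (rule exec_seq_sum_emeasure_running_le)
  finally show ?thesis
    using c_nonneg ivs_subset[of V E \<gamma> \<pi> s]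
    by (subst (asm) ennreal_le_iff) (auto simp: P_def intro!: sum_nonneg)
qed

theorem lemma2:
  fixes V :: "'v set" and E :: "('v \<times> 'v) set" and src snk :: 'v
    and S :: "'s set" and \<gamma> :: "'v \<Rightarrow> 's" and c :: "'v \<Rightarrow> real" and M :: "'s \<Rightarrow> nat"
    and run :: "real \<Rightarrow> 'v set" and f :: "'v \<Rightarrow> real" and \<pi> :: "'v list"
  assumes "dag_task V E src snk"
    and "finite S" and "\<forall>v\<in>V. \<gamma> v \<in> S"
    and "\<forall>v\<in>V. c v \<ge> 0"
    and "\<forall>s\<in>S. M s \<ge> 1"
    and "exec_seq V E \<gamma> c M run f"
    and "critical_path E src snk f \<pi>"
  shows "\<forall>s\<in>S. Ytot \<gamma> run f \<pi> s \<le> (1 / real (M s)) * (\<Sum>v\<in>ivs V E \<gamma> \<pi> s. c v)"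
proof
  fix s assume "s \<in> S"
  then have "real (M s) \<ge> 1" using assms(5) by simp
  moreover have "real (M s) * Ytot \<gamma> run f \<pi> s \<le> (\<Sum>v\<in>ivs V E \<gamma> \<pi> s. c v)"
    using assms(1,6,7,4) by (rule critical_path_mult_Ytot_le)
  ultimately show "Ytot \<gamma> run f \<pi> s \<le> (1 / real (M s)) * (\<Sum>v\<in>ivs V E \<gamma> \<pi> s. c v)"
    by (simp add: field_simps)
qed

end
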